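(* Let $\alpha,\beta,u_1,u_2,u_3,u_4$ be indeterminates and let $x,y$ be any two elements (in an algebraic closure of $\mathbb{Q}(\alpha,\beta,u_1,\dots,u_4)$) with $x+y=u_3+u_4$ and $xy=u_1u_2$. Then, as formal power series in $t$, $$\sum_{n\geq 0}P_n(u_1,u_2,u_3,u_4\mid\alpha,\beta)\frac{t^n}{n!}=\bigl(1+yF(x,y;t)\bigr)^{\frac{\alpha+\beta}{2}}\bigl(1+xF(x,y;t)\bigr)^{\frac{\alpha+\beta}{2}}\,e^{\frac12(\beta-\alpha)(u_3-u_4)t}.$$
   Context: For $\sigma=\sigma_1\cdots\sigma_m\in\mathfrak S_m$ (permutations of $[m]$): ${\rm LRmax}(\sigma)$ is the number of $i$ with $\sigma_j<\sigma_i$ for all $j<i$; ${\rm RLmax}(\sigma)$ is the number of $i$ with $\sigma_j<\sigma_i$ for all $j>i$. With the convention $\sigma_0=\sigma_{m+1}=0$: ${\rm W}(\sigma)$ (exterior peaks) is the number of $i\in[m]$ with $\sigma_{i-1}<\sigma_i>\sigma_{i+1}$; ${\rm V}(\sigma)$ (valleys) is the number of $i$ with $1<i<m$ and $\sigma_{i-1}>\sigma_i<\sigma_{i+1}$; ${\rm rdd}(\sigma)$ (right double descents) is the number of $i$ with $1<i\le m$ and $\sigma_{i-1}>\sigma_i>\sigma_{i+1}$ (using $\sigma_{m+1}=0$); ${\rm lda}(\sigma)$ (left double ascents) is the number of $i$ with $1\le i<m$ and $\sigma_{i-1}<\sigma_i<\sigma_{i+1}$ (using $\sigma_0=0$). Define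 $$P_n(u_1,u_2,u_3,u_4\mid\alpha,\beta)=\sum_{\sigma\in\mathfrak S_{n+1}}u_1^{{\rm V}(\sigma)}u_2^{{\rm W}(\sigma)-1}u_3^{{\rm rdd}(\sigma)}u_4^{{\rm lda}(\sigma)}\alpha^{{\rm LRmax}(\sigma)-1}\beta^{{\rm RLmax}(\sigma)-1}.$$ Let $F(x,y;t)=\dfrac{e^{xt}-e^{yt}}{xe^{yt}-ye^{xt}}$, a formal power series in $t$ with zero constant term; for a power series $G$ with constant term $1$ and any exponent $c$, $G^c:=\exp(c\log G)$. The right-hand side is symmetric in $x,y$. *)

theory Defs
  imports "HOL-Computational_Algebra.Formal_Power_Series" "HOL-Combinatorics.Multiset_Permutations"
begin

text \<open>A permutation sigma of [m] is a list of length m (a permutation of {1..m});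
  ext_perm s i is sigma_i (1-indexed) with sigma_0 = sigma_(m+1) = 0.\<close>
definition ext_perm :: "nat list \<Rightarrow> nat \<Rightarrow> nat" where
  "ext_perm s i = (if 1 \<le> i \<and> i \<le> length s then s ! (i - 1) else 0)"

definition LRmax :: "nat list \<Rightarrow> nat" where
  "LRmax s = card {i \<in> {1..length s}. \<forall>j. 1 \<le> j \<and> j < i \<longrightarrow> ext_perm s j < ext_perm s i}"

definition RLmax :: "nat list \<Rightarrow> nat" where
  "RLmax s = card {i \<in> {1..length s}. \<forall>j. i < j \<and> j \<le> length s \<longrightarrow> ext_perm s j < ext_perm s i}"

definition ext_peaks :: "nat list \<Rightarrow> nat" where
  "ext_peaks s = card {i \<in> {1..length s}.
     ext_perm s (i - 1) < ext_perm s i \<and> ext_perm s i > ext_perm s (i + 1)}"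

definition valleys :: "nat list \<Rightarrow> nat" where
  "valleys s = card {i. 1 < i \<and> i < length s \<and>
     ext_perm s (i - 1) > ext_perm s i \<and> ext_perm s i < ext_perm s (i + 1)}"

definition rdd :: "nat list \<Rightarrow> nat" where
  "rdd s = card {i. 1 < i \<and> i \<le> length s \<and>
     ext_perm s (i - 1) > ext_perm s i \<and> ext_perm s i > ext_perm s (i + 1)}"

definition lda :: "nat list \<Rightarrow> nat" where
  "lda s = card {i. 1 \<le> i \<and> i < length s \<and>
     ext_perm s (i - 1) < ext_perm s i \<and> ext_perm s i < ext_perm s (i + 1)}"

definition P_poly :: "nat \<Rightarrow> 'a::comm_ring_1 \<Rightarrow> 'a \<Rightarrow> 'a \<Rightarrow> 'a \<Rightarrow> 'a \<Rightarrow> 'a \<Rightarrow> 'a" where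
  "P_poly n u1 u2 u3 u4 \<alpha> \<beta> =
     (\<Sum>s\<in>permutations_of_set {1..n+1}.
        u1 ^ valleys s * u2 ^ (ext_peaks s - 1) * u3 ^ rdd s * u4 ^ lda s *
        \<alpha> ^ (LRmax s - 1) * \<beta> ^ (RLmax s - 1))"

definition F_fps :: "'a::field_char_0 \<Rightarrow> 'a \<Rightarrow> 'a fps" where
  "F_fps x y = (fps_exp x - fps_exp y) / (fps_const x * fps_exp y - fps_const y * fps_exp x)"

text \<open>G^c := exp(c log G) for G with constant term 1; log G = ln(1 + (G - 1)).\<close>
definition fps_powr :: "'a::field_char_0 fps \<Rightarrow> 'a \<Rightarrow> 'a fps" where
  "fps_powr G c = fps_exp c oo (fps_ln 1 oo (G - 1))"

end

theory Submission
  imports Defs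
begin

(*
  Cutting a permutation of [n+1] at its maximum writes it as w1 (n+1) w2. The maximum is an
  exterior peak, a left-to-right and a right-to-left maximum; the remaining statistics are
  those of w1 read with a larger letter on its right and of w2 read with a larger letter on
  its left, and only the relative order of the letters of w1 and w2 matters. Hence the
  exponential generating function of P_n is a product A * B, and cutting again at the maximum
  gives A' = \<alpha> A (u4 + u2 G), B' = \<beta> B (u3 + u2 G) and the Riccati equation
  G' = u1 + (u3 + u4) G + u2 G^2, G(0) = 0, for the permutations lying between two larger letters.
  Since F' = (1 + x F)(1 + y F), the Riccati equation is solved by G = u1 F when x + y = u3 + u4
  and x y = u1 u2; and since (log (1 + y F))' = y (1 + x F) and (log (1 + x F))' = x (1 + y F),
  the right-hand side satisfies the same linear differential equation as A * B.
*)

unbundle fps_syntax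

section \<open>Letter types of a word\<close>

(* The constructor order makes case_vtype u1 u2 u3 u4 the letter weight of P_poly. *)
datatype vtype = Valley | Peak | Double_descent | Double_ascent

fun vtype_of :: "bool \<Rightarrow> bool \<Rightarrow> vtype" where
  "vtype_of True True = Valley"
| "vtype_of False False = Peak"
| "vtype_of True False = Double_descent"
| "vtype_of False True = Double_ascent"

lemma vtype_of_eq_iff [simp]:
  "vtype_of l r = Valley \<longleftrightarrow> l \<and> r"
  "vtype_of l r = Peak \<longleftrightarrow> \<not> l \<and> \<not> r"
  "vtype_of l r = Double_descent \<longleftrightarrow> l \<and> \<not> r"
  "vtype_of l r = Double_ascent \<longleftrightarrow> \<not> l \<and> r"
  by (cases l; cases r; simp)+

(* The flags of vtype_of and vtypes say whether the left (right) neighbour is larger;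
   for vtypes they describe the virtual letters just outside the word. *)
fun vtypes :: "bool \<Rightarrow> bool \<Rightarrow> nat list \<Rightarrow> vtype list" where
  "vtypes l r [] = []"
| "vtypes l r [a] = [vtype_of l r]"
| "vtypes l r (a # b # w) = vtype_of l (a < b) # vtypes (b < a) r (b # w)"

lemma length_vtypes [simp]: "length (vtypes l r w) = length w"
  by (induction l r w rule: vtypes.induct) auto

lemma nth_vtypes:
  "j < length w \<Longrightarrow> vtypes l r w ! j =
     vtype_of (if j = 0 then l else w ! j < w ! (j - 1)) (if Suc j = length w then r else w ! j < w ! Suc j)"
proof (induction l r w arbitrary: j rule: vtypes.induct)
  case (3 l r a b w)
  then show ?case by (cases j) (auto simp: nth_Cons')
qed auto

lemma vtypes_append_max:
  assumes "\<forall>z\<in>set w1. z < a" and "\<forall>z\<in>set w2. z < a"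
  shows "vtypes l r (w1 @ a # w2) = vtypes l True w1 @ vtype_of (w1 = [] \<and> l) (w2 = [] \<and> r) # vtypes True r w2"
  using assms
proof (induction w1 arbitrary: l)
  case Nil
  then show ?case by (cases w2) auto
next
  case (Cons b w1)
  then show ?case by (cases w1) auto
qed

lemma vtypes_map:
  "strict_mono_on (set w) f \<Longrightarrow> vtypes l r (map f w) = vtypes l r w"
proof (induction l r w rule: vtypes.induct)
  case (3 l r a b w)
  then have "strict_mono_on (set (b # w)) f"
    by (elim monotone_on_subset) auto
  with 3 show ?case by (simp add: strict_mono_on_less)
qed auto

lemma ext_perm_0 [simp]: "ext_perm s 0 = 0"
  by (simp add: ext_perm_def)

lemma ext_perm_eq_0: "length s < i \<Longrightarrow> ext_perm s i = 0"
  by (simp add: ext_perm_def)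

lemma ext_perm_in_set: "1 \<le> i \<Longrightarrow> i \<le> length s \<Longrightarrow> ext_perm s i \<in> set s"
  by (simp add: ext_perm_def)

lemma ext_perm_neq:
  assumes "distinct s" and "0 \<notin> set s" and "i \<in> {1..length s}" and "j \<noteq> i"
  shows "ext_perm s j \<noteq> ext_perm s i"
proof -
  have "ext_perm s i \<in> set s"
    using assms(3) by (simp add: ext_perm_in_set)
  with assms(2) have "ext_perm s i \<noteq> 0"
    by metis
  then show ?thesis
    using assms by (auto simp: ext_perm_def nth_eq_iff_index_eq)
qed

lemma nth_vtypes_ext_perm:
  "j < length s \<Longrightarrow> vtypes False False s ! j =
     vtype_of (ext_perm s (Suc j) < ext_perm s j) (ext_perm s (Suc j) < ext_perm s (Suc (Suc j)))"
  by (simp add: nth_vtypes ext_perm_def)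

lemma count_vtypes:
  "count_list (vtypes False False s) v =
    card {i \<in> {1..length s}. vtype_of (ext_perm s i < ext_perm s (i - 1)) (ext_perm s i < ext_perm s (i + 1)) = v}"
proof -
  have "count_list (vtypes False False s) v = card {j. j < length s \<and> vtypes False False s ! j = v}"
    by (simp add: count_list_eq_length_filter length_filter_conv_card eq_commute)
  also have "\<dots> = card (Suc ` {j. j < length s \<and> vtypes False False s ! j = v})"
    by (simp add: card_image)
  also have "Suc ` {j. j < length s \<and> vtypes False False s ! j = v} =
      {i \<in> {1..length s}. vtype_of (ext_perm s i < ext_perm s (i - 1)) (ext_perm s i < ext_perm s (i + 1)) = v}"
  proof (intro set_eqI iffI)
    fix i assume "i \<in> {i \<in> {1..length s}. vtype_of (ext_perm s i < ext_perm s (i - 1)) (ext_perm s i < ext_perm s (i + 1)) = v}"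
    then show "i \<in> Suc ` {j. j < length s \<and> vtypes False False s ! j = v}"
      by (intro image_eqI[where x = "i - 1"]) (auto simp: nth_vtypes_ext_perm)
  qed (auto simp: nth_vtypes_ext_perm)
  finally show ?thesis .
qed

lemma statistics_eq_count_vtypes:
  assumes "distinct s" and "0 \<notin> set s"
  shows "valleys s = count_list (vtypes False False s) Valley"
    and "ext_peaks s = count_list (vtypes False False s) Peak"
    and "rdd s = count_list (vtypes False False s) Double_descent"
    and "lda s = count_list (vtypes False False s) Double_ascent"
proof -
  have neq: "ext_perm s (i - Suc 0) \<noteq> ext_perm s i" "ext_perm s (Suc i) \<noteq> ext_perm s i"
    if "Suc 0 \<le> i" "i \<le> length s" for i
    using ext_perm_neq[OF assms, of i] that by auto
  have end0: "ext_perm s (Suc (length s)) = 0"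
    by (simp add: ext_perm_eq_0)
  have upper: "i < length s" if "i \<le> length s" "ext_perm s i < ext_perm s (Suc i)" for i
    using that end0 by (cases "i = length s") auto
  show "valleys s = count_list (vtypes False False s) Valley"
    unfolding valleys_def count_vtypes
    by (rule arg_cong[where f = card]) (auto simp: end0 le_less)
  show "ext_peaks s = count_list (vtypes False False s) Peak"
    unfolding ext_peaks_def count_vtypes
    by (rule arg_cong[where f = card]) (auto simp: linorder_not_less order.not_eq_order_implies_strict neq)
  show "rdd s = count_list (vtypes False False s) Double_descent"
    unfolding rdd_def count_vtypes
    by (rule arg_cong[where f = card]) (auto simp: le_less linorder_not_less order.not_eq_order_implies_strict neq)
  show "lda s = count_list (vtypes False False s) Double_ascent"
    unfolding lda_def count_vtypes
    by (rule arg_cong[where f = card]) (auto simp: linorder_not_less order.not_eq_order_implies_strict neq intro: upper)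
qed

lemma ext_perm_append_Cons:
  "1 \<le> i \<Longrightarrow> i \<le> length w1 \<Longrightarrow> ext_perm (w1 @ a # w2) i = ext_perm w1 i"
  "ext_perm (w1 @ a # w2) (Suc (length w1)) = a"
  "Suc (length w1) < i \<Longrightarrow> ext_perm (w1 @ a # w2) i = ext_perm w2 (i - Suc (length w1))"
  by (auto simp: ext_perm_def nth_append)

lemma LRmax_append_max:
  assumes w1: "\<forall>z\<in>set w1. z < a" and w2: "\<forall>z\<in>set w2. z < a"
  shows "LRmax (w1 @ a # w2) = Suc (LRmax w1)"
proof -
  let ?s = "w1 @ a # w2" and ?k = "Suc (length w1)"
  let ?E = "ext_perm ?s" and ?e = "ext_perm w1"
  have "{i \<in> {1..length ?s}. \<forall>j. 1 \<le> j \<and> j < i \<longrightarrow> ?E j < ?E i} =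
      insert ?k {i \<in> {1..length w1}. \<forall>j. 1 \<le> j \<and> j < i \<longrightarrow> ?e j < ?e i}" (is "?L = ?R")
  proof (intro set_eqI iffI)
    fix i assume i: "i \<in> ?L"
    have "\<not> ?k < i"
    proof
      assume "?k < i"
      then have "?E ?k < ?E i" and "?E i \<in> set w2"
        using i by (auto simp: ext_perm_append_Cons intro!: ext_perm_in_set)
      then show False
        using w2 by (auto simp: ext_perm_append_Cons)
    qed
    then show "i \<in> ?R"
      using i by (auto simp: ext_perm_append_Cons)
  next
    fix i assume i: "i \<in> ?R"
    have "?E j < ?E ?k" if "1 \<le> j" "j < ?k" for j
      using that w1 ext_perm_in_set[of j w1] by (auto simp: ext_perm_append_Cons)
    then show "i \<in> ?L"
      using i by (auto simp: ext_perm_append_Cons)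
  qed
  then show ?thesis
    by (simp add: LRmax_def)
qed

lemma LRmax_map:
  assumes "strict_mono_on (set s) f"
  shows "LRmax (map f s) = LRmax s"
proof -
  have "ext_perm (map f s) j < ext_perm (map f s) i \<longleftrightarrow> ext_perm s j < ext_perm s i"
    if "1 \<le> j" "j < i" "i \<le> length s" for i j
    using that assms by (simp add: ext_perm_def strict_mono_on_less)
  then show ?thesis
    unfolding LRmax_def by (intro arg_cong[where f = card] Collect_cong) auto
qed

lemma LRmax_rev: "LRmax (rev s) = RLmax s"
proof -
  define n where "n = length s"
  define r where "r i = Suc n - i" for i
  have E: "ext_perm (rev s) i = ext_perm s (r i)" if "i \<in> {1..n}" for i
    using that by (auto simp: ext_perm_def rev_nth n_def r_def Suc_diff_le)
  have "{i \<in> {1..n}. \<forall>j. 1 \<le> j \<and> j < i \<longrightarrow> ext_perm (rev s) j < ext_perm (rev s) i} =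
      r ` {i \<in> {1..n}. \<forall>j. i < j \<and> j \<le> n \<longrightarrow> ext_perm s j < ext_perm s i}" (is "?L = r ` ?R")
  proof (intro set_eqI iffI)
    fix i assume i: "i \<in> ?L"
    have "r i \<in> ?R"
    proof -
      have "ext_perm s j < ext_perm s (r i)" if "r i < j" "j \<le> n" for j
      proof -
        have rj: "r j \<in> {1..n}" "r j < i" "r (r j) = j"
          using that i by (auto simp: r_def)
        with i have "ext_perm (rev s) (r j) < ext_perm (rev s) i"
          by auto
        then show ?thesis
          using E[OF rj(1)] E[of i] i rj(3) by simp
      qed
      then show ?thesis using i by (auto simp: r_def)
    qed
    moreover have "i = r (r i)"
      using i by (auto simp: r_def)
    ultimately show "i \<in> r ` ?R" by blast
  next
    fix i assume "i \<in> r ` ?R"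
    then obtain k where k: "k \<in> ?R" and i: "i = r k" by blast
    have "ext_perm (rev s) j < ext_perm (rev s) i" if "1 \<le> j" "j < i" for j
    proof -
      have ij: "i \<in> {1..n}" "j \<in> {1..n}" "k < r j" "r j \<le> n" "r i = k"
        using k i that by (auto simp: r_def)
      then show ?thesis
        using k E[OF ij(1)] E[OF ij(2)] by auto
    qed
    then show "i \<in> ?L" using k i by (auto simp: r_def)
  qed
  moreover have "inj_on r ?R"
    by (auto simp: inj_on_def r_def)
  ultimately show ?thesis
    unfolding LRmax_def RLmax_def by (simp add: card_image flip: n_def)
qed

lemma RLmax_append_max:
  assumes "\<forall>z\<in>set w1. z < a" and "\<forall>z\<in>set w2. z < a"
  shows "RLmax (w1 @ a # w2) = Suc (RLmax w2)"
  using LRmax_append_max[of "rev w2" a "rev w1"] assms by (simp flip: LRmax_rev)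

lemma RLmax_map:
  "strict_mono_on (set s) f \<Longrightarrow> RLmax (map f s) = RLmax s"
  using LRmax_map[of "rev s" f] by (simp flip: LRmax_rev add: rev_map)

section \<open>Sums over permutations split at the maximum\<close>

lemma sum_permutations_of_set_split:
  fixes h :: "nat list \<Rightarrow> 'a::comm_monoid_add"
  assumes "finite S" and "M \<in> S"
  shows "(\<Sum>\<sigma>\<in>permutations_of_set S. h \<sigma>) =
    (\<Sum>T\<in>Pow (S - {M}). \<Sum>w1\<in>permutations_of_set T. \<Sum>w2\<in>permutations_of_set (S - {M} - T). h (w1 @ M # w2))"
proof -
  let ?S = "S - {M}"
  define Z where "Z = Sigma (Pow ?S) (\<lambda>T. permutations_of_set T \<times> permutations_of_set (?S - T))"
  define j where "j = (\<lambda>(T :: nat set, w1 :: nat list, w2 :: nat list). w1 @ M # w2)"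
  have "inj_on j Z"
  proof (rule inj_onI)
    fix z z' assume "z \<in> Z" "z' \<in> Z" "j z = j z'"
    moreover obtain T w1 w2 T' w1' w2' where "z = (T, w1, w2)" "z' = (T', w1', w2')"
      by (cases z, cases z') auto
    ultimately show "z = z'"
      by (auto simp: Z_def j_def permutations_of_set_def append_Cons_eq_iff)
  qed
  moreover have "j ` Z = permutations_of_set S"
  proof (intro set_eqI iffI)
    fix s assume "s \<in> j ` Z"
    then show "s \<in> permutations_of_set S"
      using assms(2) by (auto simp: Z_def j_def permutations_of_set_def)
  next
    fix s assume s: "s \<in> permutations_of_set S"
    then obtain w1 w2 where sw: "s = w1 @ M # w2"
      using assms(2) by (metis permutations_of_setD(1) split_list)
    then have "(set w1, w1, w2) \<in> Z"
      using s by (auto simp: Z_def permutations_of_set_def)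
    then show "s \<in> j ` Z"
      using sw by (force simp: j_def)
  qed
  ultimately have "(\<Sum>\<sigma>\<in>permutations_of_set S. h \<sigma>) = (\<Sum>z\<in>Z. h (j z))"
    by (metis sum.reindex_cong)
  also have "\<dots> = (\<Sum>T\<in>Pow ?S. \<Sum>p\<in>permutations_of_set T \<times> permutations_of_set (?S - T). h (fst p @ M # snd p))"
    unfolding Z_def using assms(1) by (subst sum.Sigma) (auto simp: j_def case_prod_unfold)
  also have "\<dots> = (\<Sum>T\<in>Pow ?S. \<Sum>w1\<in>permutations_of_set T. \<Sum>w2\<in>permutations_of_set (?S - T). h (w1 @ M # w2))"
    by (simp add: sum.cartesian_product case_prod_unfold)
  finally show ?thesis .
qed

definition order_invariant :: "(nat list \<Rightarrow> 'a) \<Rightarrow> bool" where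
  "order_invariant h \<longleftrightarrow> (\<forall>f w. strict_mono_on (set w) f \<longrightarrow> h (map f w) = h w)"

definition perm_sum :: "(nat list \<Rightarrow> 'a::comm_monoid_add) \<Rightarrow> nat \<Rightarrow> 'a" where
  "perm_sum h n = (\<Sum>w\<in>permutations_of_set {1..n}. h w)"

lemma sum_permutations_of_set_relabel:
  assumes "finite T" and "order_invariant h"
  shows "(\<Sum>w\<in>permutations_of_set T. h w) = perm_sum h (card T)"
proof -
  define k where "k = card T"
  define xs where "xs = sorted_list_of_set T"
  define f where "f i = xs ! (i - 1)" for i
  have xs: "sorted_wrt (<) xs" "length xs = k" "set xs = T"
    using assms(1) by (auto simp: xs_def k_def)
  have mono: "strict_mono_on {1..k} f"
    using xs by (intro strict_mono_onI) (auto simp: f_def intro!: sorted_wrt_nth_less[OF xs(1)])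
  then have inj: "inj_on f {1..k}"
    by (rule strict_mono_on_imp_inj_on)
  have "f ` {1..k} = (!) xs ` {..<k}"
    by (force simp: f_def image_iff intro: bexI[where x = "Suc _"])
  also have "\<dots> = T"
    using xs by (auto simp: set_conv_nth)
  finally have "permutations_of_set T = map f ` permutations_of_set {1..k}"
    using permutations_of_set_image_inj[OF inj] by simp
  moreover have "inj_on (map f) (permutations_of_set {1..k})"
    using inj by (intro inj_on_mapI) (auto simp: permutations_of_set_def)
  ultimately have "(\<Sum>w\<in>permutations_of_set T. h w) = (\<Sum>w\<in>permutations_of_set {1..k}. h (map f w))"
    by (simp add: sum.reindex)
  also have "\<dots> = perm_sum h k"
    unfolding perm_sum_def
    using assms(2) mono by (intro sum.cong) (auto simp: order_invariant_def permutations_of_set_def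
      elim: monotone_on_subset)
  finally show ?thesis by (simp add: k_def)
qed

lemma sum_Pow_card:
  fixes \<phi> :: "nat \<Rightarrow> 'a::comm_semiring_1"
  assumes "finite A"
  shows "(\<Sum>T\<in>Pow A. \<phi> (card T)) = (\<Sum>k\<le>card A. of_nat (card A choose k) * \<phi> k)"
proof -
  have "(\<Sum>T\<in>Pow A. \<phi> (card T)) = (\<Sum>k\<le>card A. \<Sum>T\<in>{T \<in> Pow A. card T = k}. \<phi> (card T))"
    using assms by (intro sum.group[symmetric]) (auto intro: card_mono)
  also have "\<dots> = (\<Sum>k\<le>card A. of_nat (card A choose k) * \<phi> k)"
  proof (rule sum.cong[OF refl])
    fix k
    have "{T \<in> Pow A. card T = k} = {T. T \<subseteq> A \<and> card T = k}" by auto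
    then show "(\<Sum>T\<in>{T \<in> Pow A. card T = k}. \<phi> (card T)) = of_nat (card A choose k) * \<phi> k"
      using n_subsets[OF assms, of k] by simp
  qed
  finally show ?thesis .
qed

lemma sum_permutation_pairs_around_max:
  fixes h h1 h2 :: "nat list \<Rightarrow> 'a::comm_semiring_1"
  assumes "order_invariant h1" and "order_invariant h2" and T: "T \<subseteq> {1..n}"
    and split: "\<And>w1 w2. distinct (w1 @ Suc n # w2) \<Longrightarrow> set (w1 @ Suc n # w2) = {1..Suc n} \<Longrightarrow>
      h (w1 @ Suc n # w2) = h1 w1 * K (w1 = []) (w2 = []) * h2 w2"
  shows "(\<Sum>w1\<in>permutations_of_set T. \<Sum>w2\<in>permutations_of_set ({1..n} - T). h (w1 @ Suc n # w2)) =
    perm_sum h1 (card T) * K (card T = 0) (card T = n) * perm_sum h2 (n - card T)"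
proof -
  have "finite T" and "card T \<le> n"
    using T finite_subset card_mono[of "{1..n}" T] by auto
  with T have card_diff: "card ({1..n} - T) = n - card T"
    by (simp add: card_Diff_subset)
  have "h (w1 @ Suc n # w2) = h1 w1 * K (card T = 0) (card T = n) * h2 w2"
    if "w1 \<in> permutations_of_set T" "w2 \<in> permutations_of_set ({1..n} - T)" for w1 w2
  proof -
    have w: "set w1 = T" "set w2 = {1..n} - T" "distinct w1" "distinct w2"
      using that by (auto simp: permutations_of_set_def)
    then have "distinct (w1 @ Suc n # w2)" "set (w1 @ Suc n # w2) = {1..Suc n}"
      using T by auto
    moreover have "w1 = [] \<longleftrightarrow> card T = 0"
      using w(1) \<open>finite T\<close> by (auto simp: card_0_eq)
    moreover have "w2 = [] \<longleftrightarrow> card T = n"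
    proof -
      have "w2 = [] \<longleftrightarrow> card (set w2) = 0" by simp
      also have "card (set w2) = n - card T" using w(2) card_diff by simp
      finally show ?thesis using \<open>card T \<le> n\<close> by auto
    qed
    ultimately show ?thesis
      using split by simp
  qed
  then have "(\<Sum>w1\<in>permutations_of_set T. \<Sum>w2\<in>permutations_of_set ({1..n} - T). h (w1 @ Suc n # w2)) =
      (\<Sum>w1\<in>permutations_of_set T. h1 w1 * K (card T = 0) (card T = n)) *
      (\<Sum>w2\<in>permutations_of_set ({1..n} - T). h2 w2)"
    by (simp add: sum_product)
  also have "\<dots> = (\<Sum>w1\<in>permutations_of_set T. h1 w1) * K (card T = 0) (card T = n) *
      (\<Sum>w2\<in>permutations_of_set ({1..n} - T). h2 w2)"
    by (simp add: sum_distrib_right)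
  finally show ?thesis
    using \<open>finite T\<close> assms(1,2) by (simp add: sum_permutations_of_set_relabel card_diff[simplified])
qed

lemma perm_sum_Suc:
  fixes h h1 h2 :: "nat list \<Rightarrow> 'a::comm_semiring_1"
  assumes "order_invariant h1" and "order_invariant h2"
    and "\<And>w1 w2. distinct (w1 @ Suc n # w2) \<Longrightarrow> set (w1 @ Suc n # w2) = {1..Suc n} \<Longrightarrow>
      h (w1 @ Suc n # w2) = h1 w1 * K (w1 = []) (w2 = []) * h2 w2"
  shows "perm_sum h (Suc n) =
    (\<Sum>k\<le>n. of_nat (n choose k) * (perm_sum h1 k * K (k = 0) (k = n) * perm_sum h2 (n - k)))"
proof -
  have "{1..Suc n} - {Suc n} = {1..n}" by auto
  then have "perm_sum h (Suc n) = (\<Sum>T\<in>Pow {1..n}. \<Sum>w1\<in>permutations_of_set T.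
      \<Sum>w2\<in>permutations_of_set ({1..n} - T). h (w1 @ Suc n # w2))"
    using sum_permutations_of_set_split[of "{1..Suc n}" "Suc n" h] by (simp add: perm_sum_def)
  also have "\<dots> = (\<Sum>T\<in>Pow {1..n}.
      perm_sum h1 (card T) * K (card T = 0) (card T = n) * perm_sum h2 (n - card T))"
    using sum_permutation_pairs_around_max[OF assms(1,2) _ assms(3)] by (intro sum.cong) auto
  also have "\<dots> = (\<Sum>k\<le>n. of_nat (n choose k) * (perm_sum h1 k * K (k = 0) (k = n) * perm_sum h2 (n - k)))"
    using sum_Pow_card[of "{1..n}" "\<lambda>k. perm_sum h1 k * K (k = 0) (k = n) * perm_sum h2 (n - k)"] by simp
  finally show ?thesis .
qed

(* Weighted permutations lying to the left of, to the right of, or between larger letters. *)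
definition left_seq :: "'a::comm_semiring_1 \<Rightarrow> (vtype \<Rightarrow> 'a) \<Rightarrow> nat \<Rightarrow> 'a" where
  "left_seq \<alpha> u = perm_sum (\<lambda>w. \<alpha> ^ LRmax w * prod_list (map u (vtypes False True w)))"

definition right_seq :: "'a::comm_semiring_1 \<Rightarrow> (vtype \<Rightarrow> 'a) \<Rightarrow> nat \<Rightarrow> 'a" where
  "right_seq \<beta> u = perm_sum (\<lambda>w. \<beta> ^ RLmax w * prod_list (map u (vtypes True False w)))"

definition inner_seq :: "(vtype \<Rightarrow> 'a::comm_semiring_1) \<Rightarrow> nat \<Rightarrow> 'a" where
  "inner_seq u = perm_sum (\<lambda>w. prod_list (map u (vtypes True True w)))"

lemma perm_sum_0 [simp]: "perm_sum h 0 = h []"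
  by (simp add: perm_sum_def)

lemma
  shows left_seq_0 [simp]: "left_seq \<alpha> u 0 = 1"
    and right_seq_0 [simp]: "right_seq \<beta> u 0 = 1"
    and inner_seq_0 [simp]: "inner_seq u 0 = 1"
  by (simp_all add: left_seq_def right_seq_def inner_seq_def LRmax_def RLmax_def cong: conj_cong)

lemma split_at_max_bounds:
  assumes "distinct (w1 @ Suc n # w2)" and "set (w1 @ Suc n # w2) = {1..Suc n}"
  shows "\<forall>z\<in>set w1. z < Suc n" and "\<forall>z\<in>set w2. z < Suc n" and "0 \<notin> set (w1 @ Suc n # w2)"
  using assms by (auto simp: le_less)

lemma order_invariant_vtypes_weight:
  "order_invariant (\<lambda>w. \<alpha> ^ LRmax w * prod_list (map u (vtypes l r w)))"
  "order_invariant (\<lambda>w. \<beta> ^ RLmax w * prod_list (map u (vtypes l r w)))"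
  "order_invariant (\<lambda>w. prod_list (map u (vtypes l r w)))"
  by (simp_all add: order_invariant_def LRmax_map RLmax_map vtypes_map)

lemma left_seq_Suc:
  "left_seq \<alpha> u (Suc n) =
    (\<Sum>k\<le>n. of_nat (n choose k) * (left_seq \<alpha> u k * (\<alpha> * u (vtype_of False (k = n))) * inner_seq u (n - k)))"
  unfolding left_seq_def inner_seq_def
proof (rule perm_sum_Suc[OF order_invariant_vtypes_weight(1,3)])
  fix w1 w2 assume "distinct (w1 @ Suc n # w2)" "set (w1 @ Suc n # w2) = {1..Suc n}"
  note bounds = split_at_max_bounds[OF this]
  show "\<alpha> ^ LRmax (w1 @ Suc n # w2) * prod_list (map u (vtypes False True (w1 @ Suc n # w2))) =
      \<alpha> ^ LRmax w1 * prod_list (map u (vtypes False True w1)) * (\<alpha> * u (vtype_of False (w2 = []))) *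
      prod_list (map u (vtypes True True w2))"
    using LRmax_append_max[OF bounds(1,2)] vtypes_append_max[OF bounds(1,2)] by (simp add: algebra_simps)
qed

lemma right_seq_Suc:
  "right_seq \<beta> u (Suc n) =
    (\<Sum>k\<le>n. of_nat (n choose k) * (inner_seq u k * (\<beta> * u (vtype_of (k = 0) False)) * right_seq \<beta> u (n - k)))"
  unfolding right_seq_def inner_seq_def
proof (rule perm_sum_Suc[OF order_invariant_vtypes_weight(3,2)])
  fix w1 w2 assume "distinct (w1 @ Suc n # w2)" "set (w1 @ Suc n # w2) = {1..Suc n}"
  note bounds = split_at_max_bounds[OF this]
  show "\<beta> ^ RLmax (w1 @ Suc n # w2) * prod_list (map u (vtypes True False (w1 @ Suc n # w2))) =
      prod_list (map u (vtypes True True w1)) * (\<beta> * u (vtype_of (w1 = []) False)) *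
      (\<beta> ^ RLmax w2 * prod_list (map u (vtypes True False w2)))"
    using RLmax_append_max[OF bounds(1,2)] vtypes_append_max[OF bounds(1,2)] by (simp add: algebra_simps)
qed

lemma inner_seq_Suc:
  "inner_seq u (Suc n) =
    (\<Sum>k\<le>n. of_nat (n choose k) * (inner_seq u k * u (vtype_of (k = 0) (k = n)) * inner_seq u (n - k)))"
  unfolding inner_seq_def
proof (rule perm_sum_Suc[OF order_invariant_vtypes_weight(3,3)])
  fix w1 w2 assume "distinct (w1 @ Suc n # w2)" "set (w1 @ Suc n # w2) = {1..Suc n}"
  note bounds = split_at_max_bounds[OF this]
  show "prod_list (map u (vtypes True True (w1 @ Suc n # w2))) =
      prod_list (map u (vtypes True True w1)) * u (vtype_of (w1 = []) (w2 = [])) *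
      prod_list (map u (vtypes True True w2))"
    using vtypes_append_max[OF bounds(1,2)] by (simp add: algebra_simps)
qed

lemma prod_list_map_case_vtype:
  fixes u1 u2 u3 u4 :: "'a::comm_monoid_mult"
  shows "prod_list (map (case_vtype u1 u2 u3 u4) l) =
    u1 ^ count_list l Valley * u2 ^ count_list l Peak *
    u3 ^ count_list l Double_descent * u4 ^ count_list l Double_ascent"
  by (induction l) (auto split: vtype.split simp: algebra_simps)

lemma P_poly_eq_sum:
  fixes u1 u2 u3 u4 \<alpha> \<beta> :: "'a::comm_ring_1"
  defines "u \<equiv> case_vtype u1 u2 u3 u4"
  shows "P_poly n u1 u2 u3 u4 \<alpha> \<beta> =
    (\<Sum>k\<le>n. of_nat (n choose k) * left_seq \<alpha> u k * right_seq \<beta> u (n - k))"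
proof -
  have "P_poly n u1 u2 u3 u4 \<alpha> \<beta> = perm_sum (\<lambda>s. u1 ^ valleys s * u2 ^ (ext_peaks s - 1) *
      u3 ^ rdd s * u4 ^ lda s * \<alpha> ^ (LRmax s - 1) * \<beta> ^ (RLmax s - 1)) (Suc n)"
    by (simp add: P_poly_def perm_sum_def)
  also have "\<dots> = (\<Sum>k\<le>n. of_nat (n choose k) * (left_seq \<alpha> u k * 1 * right_seq \<beta> u (n - k)))"
    unfolding left_seq_def right_seq_def
  proof (rule perm_sum_Suc[OF order_invariant_vtypes_weight(1,2)])
    fix w1 w2 assume D: "distinct (w1 @ Suc n # w2)" "set (w1 @ Suc n # w2) = {1..Suc n}"
    note bounds = split_at_max_bounds[OF D]
    have "vtypes False False (w1 @ Suc n # w2) = vtypes False True w1 @ Peak # vtypes True False w2"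
      using vtypes_append_max[OF bounds(1,2)] by simp
    then show "u1 ^ valleys (w1 @ Suc n # w2) * u2 ^ (ext_peaks (w1 @ Suc n # w2) - 1) *
        u3 ^ rdd (w1 @ Suc n # w2) * u4 ^ lda (w1 @ Suc n # w2) *
        \<alpha> ^ (LRmax (w1 @ Suc n # w2) - 1) * \<beta> ^ (RLmax (w1 @ Suc n # w2) - 1) =
        \<alpha> ^ LRmax w1 * prod_list (map u (vtypes False True w1)) * 1 *
        (\<beta> ^ RLmax w2 * prod_list (map u (vtypes True False w2)))"
      using LRmax_append_max[OF bounds(1,2)] RLmax_append_max[OF bounds(1,2)]
      by (simp add: statistics_eq_count_vtypes[OF D(1) bounds(3)] u_def prod_list_map_case_vtype
          power_add algebra_simps)
  qed
  finally show ?thesis by (simp add: mult.assoc)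
qed

section \<open>Differential equations for formal power series\<close>

lemma fps_mult_nth_cong:
  fixes X Y X' Y' :: "'a::comm_semiring_1 fps"
  assumes "\<And>m. m \<le> n \<Longrightarrow> X $ m = Y $ m" and "\<And>m. m \<le> n \<Longrightarrow> X' $ m = Y' $ m"
  shows "(X * X') $ n = (Y * Y') $ n"
  using assms by (auto simp: fps_mult_nth intro!: sum.cong)

lemma fps_ode_unique:
  fixes X Y :: "'a::field_char_0 fps"
  assumes "fps_deriv X = \<Phi> X" and "fps_deriv Y = \<Phi> Y" and "X $ 0 = Y $ 0"
    and causal: "\<And>X Y n. (\<And>m. m \<le> n \<Longrightarrow> X $ m = Y $ m) \<Longrightarrow> \<Phi> X $ n = \<Phi> Y $ n"
  shows "X = Y"
proof -
  have "\<forall>m\<le>n. X $ m = Y $ m" for n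
  proof (induction n)
    case 0
    then show ?case using assms(3) by simp
  next
    case (Suc n)
    then have "\<Phi> X $ n = \<Phi> Y $ n"
      by (intro causal) simp
    then have "fps_deriv X $ n = fps_deriv Y $ n"
      using assms(1,2) by simp
    then have "X $ Suc n = Y $ Suc n"
      by (simp del: of_nat_Suc)
    then show ?case using Suc by (auto simp: le_Suc_eq)
  qed
  then show ?thesis by (auto simp: fps_eq_iff)
qed

lemma fps_linear_ode_unique:
  fixes X Y :: "'a::field_char_0 fps"
  assumes "fps_deriv X = X * c" and "fps_deriv Y = Y * c" and "X $ 0 = Y $ 0"
  shows "X = Y"
proof (rule fps_ode_unique[where \<Phi> = "\<lambda>Z. Z * c"])
  show "(X' * c) $ n = (Y' * c) $ n" if "\<And>m. m \<le> n \<Longrightarrow> X' $ m = Y' $ m" for X' Y' :: "'a fps" and n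
    by (rule fps_mult_nth_cong[OF that refl])
qed (use assms in auto)

lemma fps_deriv_fps_powr:
  fixes G H :: "'a::field_char_0 fps"
  assumes G0: "G $ 0 = 1" and dG: "fps_deriv G = G * H"
  shows "fps_deriv (fps_powr G c) = fps_powr G c * (fps_const c * H)"
proof -
  define L where "L = fps_ln 1 oo (G - 1)"
  have G1: "(G - 1) $ 0 = 0" using G0 by simp
  have "fps_deriv L = (inverse (1 + fps_X) oo (G - 1)) * fps_deriv G"
    unfolding L_def using fps_compose_deriv[OF G1] by (simp add: fps_ln_deriv)
  also have "inverse (1 + fps_X) oo (G - 1) = inverse G"
    using fps_inverse_compose[OF G1] G1 by (simp add: fps_compose_add_distrib)
  also have "inverse G * fps_deriv G = H"
    using G0 by (simp add: dG mult.assoc[symmetric] inverse_mult_eq_1)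
  finally have dL: "fps_deriv L = H" .
  have "fps_deriv (fps_exp c oo L) = (fps_const c * fps_exp c oo L) * fps_deriv L"
    by (simp add: L_def fps_compose_deriv)
  then show ?thesis
    by (simp add: fps_powr_def dL flip: L_def fps_const_mult_apply_left)
qed

lemma fps_powr_nth_0: "G $ 0 = 1 \<Longrightarrow> fps_powr G c $ 0 = 1"
  by (simp add: fps_powr_def)

lemma F_fps_nth_0: "F_fps x y $ 0 = 0"
  by (cases "x = y") (simp_all add: F_fps_def fps_divide_unit)

lemma F_fps_deriv:
  fixes x y :: "'a::field_char_0"
  assumes "x \<noteq> y"
  shows "fps_deriv (F_fps x y) = (1 + fps_const x * F_fps x y) * (1 + fps_const y * F_fps x y)"
proof -
  define N where "N = fps_exp x - (fps_exp y :: 'a fps)"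
  define D where "D = fps_const x * fps_exp y - fps_const y * (fps_exp x :: 'a fps)"
  define I where "I = inverse D"
  have "D $ 0 \<noteq> 0" using assms by (simp add: D_def)
  then have DI: "D * I = 1" and dI: "fps_deriv I = - fps_deriv D * I^2"
    by (simp_all add: I_def inverse_mult_eq_1' fps_inverse_deriv)
  have F: "F_fps x y = N * I"
    using \<open>D $ 0 \<noteq> 0\<close> by (simp add: F_fps_def fps_divide_unit N_def D_def I_def)
  have key: "fps_deriv N * D - N * fps_deriv D = (D + fps_const x * N) * (D + fps_const y * N)"
    by (simp add: N_def D_def algebra_simps)
  have "fps_deriv (F_fps x y) = fps_deriv N * I + N * fps_deriv I"
    unfolding F fps_deriv_mult by (rule add.commute)
  also have "\<dots> = (fps_deriv N * D - N * fps_deriv D) * I^2"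
    unfolding dI by (simp add: algebra_simps power2_eq_square DI)
  also have "\<dots> = (D * I + fps_const x * (N * I)) * (D * I + fps_const y * (N * I))"
    unfolding key by (simp only: power2_eq_square ac_simps distrib_left distrib_right)
  finally show ?thesis by (simp only: DI F)
qed

lemma riccati_solution:
  fixes a b x y :: "'a::field_char_0"
  assumes xy: "x * y = a * b" and "x \<noteq> y"
    and dG: "fps_deriv G = fps_const a + fps_const (x + y) * G + fps_const b * G^2"
    and "G $ 0 = 0"
  shows "G = fps_const a * F_fps x y"
proof (rule fps_ode_unique[where \<Phi> = "\<lambda>Z. fps_const a + fps_const (x + y) * Z + fps_const b * Z^2"])
  let ?F = "F_fps x y"
  have "fps_deriv (fps_const a * ?F) = fps_const a * ((1 + fps_const x * ?F) * (1 + fps_const y * ?F))"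
    using F_fps_deriv[OF \<open>x \<noteq> y\<close>] by simp
  also have "\<dots> = fps_const a + fps_const (x + y) * (fps_const a * ?F) + fps_const (x * y) * fps_const a * ?F^2"
    by (simp add: algebra_simps power2_eq_square flip: fps_const_mult fps_const_add)
  also have "\<dots> = fps_const a + fps_const (x + y) * (fps_const a * ?F) + fps_const b * (fps_const a * ?F)^2"
    unfolding xy by (simp add: algebra_simps power2_eq_square flip: fps_const_mult)
  finally show "fps_deriv (fps_const a * ?F) = fps_const a + fps_const (x + y) * (fps_const a * ?F) + fps_const b * (fps_const a * ?F)^2" .
  show "(\<lambda>Z. fps_const a + fps_const (x + y) * Z + fps_const b * Z^2) X $ n =
      (\<lambda>Z. fps_const a + fps_const (x + y) * Z + fps_const b * Z^2) Y $ n"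
    if "\<And>m. m \<le> n \<Longrightarrow> X $ m = Y $ m" for X Y :: "'a fps" and n
    using that fps_mult_nth_cong[OF that that] by (simp add: power2_eq_square)
qed (simp_all add: dG \<open>G $ 0 = 0\<close> F_fps_nth_0)

lemma fps_deriv_powr_F_exp:
  fixes x y \<gamma> \<delta> :: "'a::field_char_0"
  assumes "x \<noteq> y"
  defines "R \<equiv> fps_powr (1 + fps_const y * F_fps x y) \<gamma> * fps_powr (1 + fps_const x * F_fps x y) \<gamma> * fps_exp \<delta>"
  shows "fps_deriv R = R * (fps_const (\<gamma> * (x + y) + \<delta>) + fps_const (2 * \<gamma> * x * y) * F_fps x y)"
proof -
  let ?F = "F_fps x y"
  note dF = F_fps_deriv[OF assms(1)]
  have "fps_deriv (fps_powr (1 + fps_const y * ?F) \<gamma>) =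
      fps_powr (1 + fps_const y * ?F) \<gamma> * (fps_const \<gamma> * (fps_const y * (1 + fps_const x * ?F)))"
    by (rule fps_deriv_fps_powr) (simp_all add: F_fps_nth_0 dF)
  moreover have "fps_deriv (fps_powr (1 + fps_const x * ?F) \<gamma>) =
      fps_powr (1 + fps_const x * ?F) \<gamma> * (fps_const \<gamma> * (fps_const x * (1 + fps_const y * ?F)))"
    by (rule fps_deriv_fps_powr) (simp_all add: F_fps_nth_0 dF algebra_simps)
  ultimately show ?thesis
    unfolding R_def by (simp add: algebra_simps numeral_fps_const flip: fps_const_mult fps_const_add)
qed

section \<open>Exponential generating functions\<close>

definition egf :: "(nat \<Rightarrow> 'a::field_char_0) \<Rightarrow> 'a fps" where
  "egf a = Abs_fps (\<lambda>n. a n / fact n)"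

lemma egf_mult: "egf a * egf b = egf (\<lambda>n. \<Sum>k\<le>n. of_nat (n choose k) * a k * b (n - k))"
proof (rule fps_ext)
  fix n
  have "(egf a * egf b) $ n = (\<Sum>k\<le>n. a k / fact k * (b (n - k) / fact (n - k)))"
    by (simp add: egf_def fps_mult_nth atLeast0AtMost)
  also have "\<dots> = (\<Sum>k\<le>n. of_nat (n choose k) * a k * b (n - k)) / fact n"
    unfolding sum_divide_distrib by (intro sum.cong refl) (simp add: binomial_fact field_simps)
  finally show "(egf a * egf b) $ n = egf (\<lambda>n. \<Sum>k\<le>n. of_nat (n choose k) * a k * b (n - k)) $ n"
    by (simp add: egf_def)
qed

lemma fps_deriv_egf: "fps_deriv (egf a) = egf (\<lambda>n. a (Suc n))"
  by (rule fps_ext) (simp add: egf_def field_simps del: of_nat_Suc)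

lemma egf_add: "egf (\<lambda>n. a n + b n) = egf a + egf b"
  by (rule fps_ext) (simp add: egf_def add_divide_distrib)

lemma egf_cmult: "egf (\<lambda>n. c * a n) = fps_const c * egf a"
  by (rule fps_ext) (simp add: egf_def)

lemma fps_deriv_egf_left_seq:
  fixes \<alpha> :: "'a::field_char_0"
  shows "fps_deriv (egf (left_seq \<alpha> u)) = egf (left_seq \<alpha> u) *
    (fps_const \<alpha> * (fps_const (u Double_ascent) + fps_const (u Peak) * (egf (inner_seq u) - 1)))"
proof -
  define c where "c m = \<alpha> * u (vtype_of False (m = 0)) * inner_seq u m" for m
  have "left_seq \<alpha> u (Suc n) = (\<Sum>k\<le>n. of_nat (n choose k) * left_seq \<alpha> u k * c (n - k))" for n
  proof -
    have "(n - k = 0) = (k = n)" if "k \<in> {..n}" for k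
      using that by auto
    then show ?thesis
      unfolding left_seq_Suc c_def by (intro sum.cong refl) (simp add: mult.assoc)
  qed
  then have "fps_deriv (egf (left_seq \<alpha> u)) = egf (left_seq \<alpha> u) * egf c"
    by (simp add: fps_deriv_egf egf_mult)
  also have "egf c = fps_const \<alpha> * (fps_const (u Double_ascent) + fps_const (u Peak) * (egf (inner_seq u) - 1))"
    by (rule fps_ext) (simp add: c_def egf_def algebra_simps)
  finally show ?thesis .
qed

lemma fps_deriv_egf_right_seq:
  fixes \<beta> :: "'a::field_char_0"
  shows "fps_deriv (egf (right_seq \<beta> u)) = egf (right_seq \<beta> u) *
    (fps_const \<beta> * (fps_const (u Double_descent) + fps_const (u Peak) * (egf (inner_seq u) - 1)))"
proof -
  define c where "c m = inner_seq u m * (\<beta> * u (vtype_of (m = 0) False))" for m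
  have "right_seq \<beta> u (Suc n) = (\<Sum>k\<le>n. of_nat (n choose k) * c k * right_seq \<beta> u (n - k))" for n
    unfolding right_seq_Suc c_def by (simp add: mult.assoc)
  then have "fps_deriv (egf (right_seq \<beta> u)) = egf c * egf (right_seq \<beta> u)"
    by (simp add: fps_deriv_egf egf_mult)
  also have "egf c = fps_const \<beta> * (fps_const (u Double_descent) + fps_const (u Peak) * (egf (inner_seq u) - 1))"
    by (rule fps_ext) (simp add: c_def egf_def algebra_simps)
  finally show ?thesis by (simp add: mult.commute)
qed

lemma fps_deriv_egf_inner_seq:
  fixes u :: "vtype \<Rightarrow> 'a::field_char_0"
  defines "G \<equiv> egf (inner_seq u) - 1"
  shows "fps_deriv G = fps_const (u Valley) + fps_const (u Double_descent + u Double_ascent) * G +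
    fps_const (u Peak) * G^2"
proof -
  define d where "d m = (if m = 0 then 1 else 0 :: 'a)" for m :: nat
  define g where "g m = (if m = 0 then 0 else inner_seq u m)" for m :: nat
  have "egf d = 1" and "egf g = G"
    by (rule fps_ext; simp add: G_def d_def g_def egf_def)+
  \<comment> \<open>split each factor according to whether its side of the maximum is empty\<close>
  have "inner_seq u k * u (vtype_of (k = 0) (k = n)) * inner_seq u (n - k) =
      u Valley * (d k * d (n - k)) + u Double_descent * (d k * g (n - k)) +
      u Double_ascent * (g k * d (n - k)) + u Peak * (g k * g (n - k))" if "k \<le> n" for k n
    using that by (cases "k = 0"; cases "k = n") (simp_all add: d_def g_def)
  then have "inner_seq u (Suc n) =
      u Valley * (\<Sum>k\<le>n. of_nat (n choose k) * d k * d (n - k)) +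
      u Double_descent * (\<Sum>k\<le>n. of_nat (n choose k) * d k * g (n - k)) +
      u Double_ascent * (\<Sum>k\<le>n. of_nat (n choose k) * g k * d (n - k)) +
      u Peak * (\<Sum>k\<le>n. of_nat (n choose k) * g k * g (n - k))" for n
    by (simp add: inner_seq_Suc sum_distrib_left sum.distrib algebra_simps)
  then have "fps_deriv G = fps_const (u Valley) * (egf d * egf d) + fps_const (u Double_descent) * (egf d * egf g) +
      fps_const (u Double_ascent) * (egf g * egf d) + fps_const (u Peak) * (egf g * egf g)"
    by (simp add: G_def fps_deriv_egf egf_mult egf_add egf_cmult)
  then show ?thesis
    by (simp add: \<open>egf d = 1\<close> \<open>egf g = G\<close> algebra_simps power2_eq_square flip: fps_const_add)
qed

theorem theorem1p4:
  fixes \<alpha> \<beta> u1 u2 u3 u4 x y :: "'a::field_char_0"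
  assumes "x + y = u3 + u4" and "x * y = u1 * u2" and "x \<noteq> y"
  shows "Abs_fps (\<lambda>n. P_poly n u1 u2 u3 u4 \<alpha> \<beta> / fact n) =
    fps_powr (1 + fps_const y * F_fps x y) ((\<alpha> + \<beta>) / 2) *
    fps_powr (1 + fps_const x * F_fps x y) ((\<alpha> + \<beta>) / 2) *
    fps_exp ((\<beta> - \<alpha>) * (u3 - u4) / 2)"
    (is "_ = ?R")
proof -
  define u where "u = case_vtype u1 u2 u3 u4"
  define A where "A = egf (left_seq \<alpha> u)"
  define B where "B = egf (right_seq \<beta> u)"
  define c where "c = fps_const (\<alpha> * u4 + \<beta> * u3) + fps_const ((\<alpha> + \<beta>) * (u1 * u2)) * F_fps x y"
  have "Abs_fps (\<lambda>n. P_poly n u1 u2 u3 u4 \<alpha> \<beta> / fact n) = A * B"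
    unfolding A_def B_def egf_mult by (simp add: egf_def P_poly_eq_sum u_def)
  moreover have "egf (inner_seq u) - 1 = fps_const u1 * F_fps x y"
    using fps_deriv_egf_inner_seq[of u] assms
    by (intro riccati_solution[where b = u2]) (simp_all add: u_def egf_def)
  then have "fps_deriv (A * B) = A * B * c"
    by (simp add: A_def B_def c_def fps_deriv_egf_left_seq fps_deriv_egf_right_seq u_def
        algebra_simps flip: fps_const_mult fps_const_add)
  moreover have "fps_deriv ?R = ?R * c"
  proof -
    have "(\<alpha> + \<beta>) / 2 * (x + y) + (\<beta> - \<alpha>) * (u3 - u4) / 2 = \<alpha> * u4 + \<beta> * u3"
      using assms(1) by (simp add: field_simps)
    moreover have "2 * ((\<alpha> + \<beta>) / 2) * x * y = (\<alpha> + \<beta>) * (u1 * u2)"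
      by (simp flip: assms(2) mult.assoc)
    ultimately show ?thesis
      using fps_deriv_powr_F_exp[OF assms(3), of "(\<alpha> + \<beta>) / 2" "(\<beta> - \<alpha>) * (u3 - u4) / 2"]
      by (simp add: c_def)
  qed
  moreover have "(A * B) $ 0 = ?R $ 0"
    by (simp add: A_def B_def egf_def fps_powr_nth_0 F_fps_nth_0)
  ultimately show ?thesis
    using fps_linear_ode_unique by metis
qed

end
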